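(* Let $K\ge1$ and $m$ be positive integers, and for $k=1,\dots,K$ let $\sigma_k^2>0$, $P_k>0$, $\lambda_k\in[0,1)$; let $\mathcal N_0>0$ and $\mathcal R>0$. Put $\Omega_k=\frac{P_k\sigma_k^2(1-\lambda_k^2)}{m\mathcal N_0}$, $w_k=\frac{\lambda_k^2}{1-\lambda_k^2}\big(1+\sum_{l=1}^K\frac{\lambda_l^2}{1-\lambda_l^2}\big)^{-1}$ and for $\boldsymbol\ell\in\mathbb N_0^K$ $$W_{\boldsymbol\ell}=\frac{\Gamma(m+\sum_k\ell_k)}{\Gamma(m)}\Big(1+\sum_{k=1}^K\frac{\lambda_k^2}{1-\lambda_k^2}\Big)^{-m}\prod_{k=1}^K\frac{w_k^{\ell_k}}{\ell_k!}.$$ Let $F_{\mathcal A_{\boldsymbol\ell}}$ be the CDF of $\prod_{k=1}^K(1+R_{\boldsymbol\ell,k})$ with $R_{\boldsymbol\ell,k}$ independent, $R_{\boldsymbol\ell,k}\sim\mathcal G(m+\ell_k,\Omega_k)$. For an integer $N\ge0$ define the truncation error $\nabla(N)=\sum_{\boldsymbol\ell\in\mathbb N_0^K:\ \sum_k\ell_k\ge N+1}W_{\boldsymbol\ell}F_{\mathcal A_{\boldsymbol\ell}}(2^{\mathcal R})$. Then $$0\le\nabla(N)\le W_{\mathbf 0}\,F^{\max}_{\mathcal A_{\boldsymbol\ell},N}(2^{\mathcal R})\,\xi(N),$$ where $F^{\max}_{\mathcal A_{\boldsymbol\ell},N}(2^{\mathcal R})=\max_{\sum_k\ell_k=N+1}F_{\mathcal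 A_{\boldsymbol\ell}}(2^{\mathcal R})$ and $$\xi(N)=\Big(\sum_{k=1}^Kw_k\Big)^{N+1}\frac{(m)_{N+1}}{(N+1)!}\,{}_2F_1\Big(m+N+1,1;N+2;\sum_{k=1}^Kw_k\Big).$$
   Context: $\mathcal G(a,b)$ is the Gamma distribution with shape $a$ and scale $b$ (density $x^{a-1}e^{-x/b}/(\Gamma(a)b^a)$). $(m)_n$ is the Pochhammer symbol and ${}_2F_1$ the Gauss hypergeometric function. *)

theory Defs
  imports "HOL-Probability.Probability"
begin

definition gamma_density :: "real \<Rightarrow> real \<Rightarrow> real \<Rightarrow> real" where
  "gamma_density a b x =
     (if 0 < x then x powr (a - 1) * exp (- x / b) / (Gamma a * b powr a) else 0)"

definition gamma_distr :: "real \<Rightarrow> real \<Rightarrow> real measure" where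
  "gamma_distr a b = density lborel (\<lambda>x. ennreal (gamma_density a b x))"

definition hyp2F1 :: "real \<Rightarrow> real \<Rightarrow> real \<Rightarrow> real \<Rightarrow> real" where
  "hyp2F1 a b c z =
     (\<Sum>n. pochhammer a n * pochhammer b n / (pochhammer c n * fact n) * z ^ n)"

text \<open>Multi-indices in N_0^K, indexed by 0..K-1 (zero outside).\<close>
definition multi_idx :: "nat \<Rightarrow> (nat \<Rightarrow> nat) set" where
  "multi_idx K = {l. \<forall>k\<ge>K. l k = 0}"

definition Omega_k :: "nat \<Rightarrow> (nat \<Rightarrow> real) \<Rightarrow> (nat \<Rightarrow> real) \<Rightarrow> (nat \<Rightarrow> real) \<Rightarrow> real \<Rightarrow> nat \<Rightarrow> real" where
  "Omega_k m P sigma2 lam N0 k = P k * sigma2 k * (1 - (lam k)\<^sup>2) / (real m * N0)"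

definition Ssum :: "nat \<Rightarrow> (nat \<Rightarrow> real) \<Rightarrow> real" where
  "Ssum K lam = 1 + (\<Sum>l<K. (lam l)\<^sup>2 / (1 - (lam l)\<^sup>2))"

definition w_k :: "nat \<Rightarrow> (nat \<Rightarrow> real) \<Rightarrow> nat \<Rightarrow> real" where
  "w_k K lam k = (lam k)\<^sup>2 / (1 - (lam k)\<^sup>2) / Ssum K lam"

definition W_l :: "nat \<Rightarrow> nat \<Rightarrow> (nat \<Rightarrow> real) \<Rightarrow> (nat \<Rightarrow> nat) \<Rightarrow> real" where
  "W_l K m lam l =
     Gamma (real m + real (\<Sum>k<K. l k)) / Gamma (real m) * Ssum K lam powr (- real m)
     * (\<Prod>k<K. w_k K lam k ^ l k / fact (l k))"

text \<open>CDF of prod_k (1 + R_k), R_k independent, R_k ~ Gamma(m + l k, Omega k):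
  realised as coordinates of the product probability space.\<close>
definition F_A :: "nat \<Rightarrow> nat \<Rightarrow> (nat \<Rightarrow> real) \<Rightarrow> (nat \<Rightarrow> nat) \<Rightarrow> real \<Rightarrow> real" where
  "F_A K m Om l x =
     measure (PiM {..<K} (\<lambda>k. gamma_distr (real m + real (l k)) (Om k)))
       {r \<in> space (PiM {..<K} (\<lambda>k. gamma_distr (real m + real (l k)) (Om k))).
          (\<Prod>k<K. 1 + r k) \<le> x}"

end

theory Submission
  imports Defs
begin

text \<open>
  Raising the shape of one Gamma factor makes that factor stochastically larger, so the CDF
  \<open>F_A\<close> of the product decreases as the multi-index grows; every term of the tail is therefore
  at most \<open>W\<^sub>\<ell>\<close> times the maximum of \<open>F_A\<close> over \<open>|\<ell>| = N + 1\<close>. By the multinomial theorem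
  the weights with \<open>|\<ell>| = n\<close> add up to \<open>W\<^sub>0 (m)\<^sub>n s\<^sup>n / n!\<close> with \<open>s = \<Sum>\<^sub>k w\<^sub>k < 1\<close>, and the tail
  \<open>n \<ge> N + 1\<close> of this negative binomial series is exactly \<open>s\<^sup>N\<^sup>+\<^sup>1 (m)\<^sub>N\<^sub>+\<^sub>1/(N+1)! \<^sub>2F\<^sub>1(m+N+1,1;N+2;s)\<close>.
\<close>

subsection \<open>Gamma distributions with integer shape\<close>

lemma borel_measurable_gamma_density[measurable]: "gamma_density a b \<in> borel_measurable borel"
  unfolding gamma_density_def by measurable

lemma gamma_distr_eq_erlang:
  assumes n: "1 \<le> n" and b: "0 < b"
  shows "gamma_distr (real n) b = density lborel (\<lambda>x. ennreal (erlang_density (n - 1) (1 / b) x))"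
  unfolding gamma_distr_def
proof (rule density_cong)
  show "(\<lambda>x. ennreal (gamma_density (real n) b x)) \<in> borel_measurable lborel"
    "(\<lambda>x. ennreal (erlang_density (n - 1) (1 / b) x)) \<in> borel_measurable lborel"
    by measurable
  have eq: "gamma_density (real n) b x = erlang_density (n - 1) (1 / b) x" if "x \<noteq> 0" for x
  proof (cases "0 < x")
    case True
    have "Gamma (real n) = fact (n - 1)"
      using n Gamma_fact[of "n - 1"] by (simp add: of_nat_diff)
    moreover have "x powr (real n - 1) = x ^ (n - 1)"
      using True n by (simp add: powr_realpow[symmetric] of_nat_diff)
    moreover have "b powr real n = b * b ^ (n - 1)"
      using b n by (simp add: powr_realpow power_Suc[symmetric])
    moreover have "(1 / b) ^ n = 1 / (b * b ^ (n - 1))"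
      using n by (simp add: power_one_over power_Suc[symmetric])
    ultimately show ?thesis
      using True b n by (simp add: gamma_density_def erlang_density_def field_simps)
  next
    case False
    then show ?thesis using that by (simp add: gamma_density_def erlang_density_def)
  qed
  show "AE x in lborel. ennreal (gamma_density (real n) b x)
                      = ennreal (erlang_density (n - 1) (1 / b) x)"
    using AE_lborel_singleton[of 0] by eventually_elim (simp add: eq)
qed

lemma prob_space_gamma_distr: "1 \<le> n \<Longrightarrow> 0 < b \<Longrightarrow> prob_space (gamma_distr (real n) b)"
  by (simp add: gamma_distr_eq_erlang prob_space_erlang_density)

lemma sets_gamma_distr: "sets (gamma_distr a b) = sets borel"
  by (simp add: gamma_distr_def)

lemma emeasure_gamma_distr_atMost:
  "1 \<le> n \<Longrightarrow> 0 < b \<Longrightarrow>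
    emeasure (gamma_distr (real n) b) {..t} = ennreal (erlang_CDF (n - 1) (1 / b) t)"
  by (simp add: gamma_distr_eq_erlang emeasure_erlang_density)

lemma emeasure_gamma_distr_negative: "emeasure (gamma_distr a b) {..<0} = 0"
proof -
  have "emeasure (gamma_distr a b) {..<0}
      = (\<integral>\<^sup>+ x. ennreal (gamma_density a b x) * indicator {..<0} x \<partial>lborel)"
    by (simp add: gamma_distr_def emeasure_density)
  also have "\<dots> = (\<integral>\<^sup>+ x. 0 \<partial>(lborel :: real measure))"
    by (rule nn_integral_cong) (auto simp: gamma_density_def split: split_indicator)
  finally show ?thesis by simp
qed

lemma emeasure_gamma_distr_Suc_atMost_le:
  assumes "1 \<le> n" and "0 < b"
  shows "emeasure (gamma_distr (real (Suc n)) b) {..t} \<le> emeasure (gamma_distr (real n) b) {..t}"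
proof -
  have "erlang_CDF n (1 / b) t \<le> erlang_CDF (n - 1) (1 / b) t"
    using assms by (cases n) (simp_all add: erlang_CDF_def)
  then show ?thesis
    using assms emeasure_gamma_distr_atMost[of "Suc n" b t] emeasure_gamma_distr_atMost[of n b t]
    by simp
qed

subsection \<open>Products of independent factors and stochastic dominance\<close>

lemma emeasure_PiM_insert_prod_le:
  fixes M :: "nat \<Rightarrow> real measure"
  assumes SF: "\<And>k. sigma_finite_measure (M k)" and SM: "\<And>k. sets (M k) = sets borel"
    and J: "finite J" "j \<notin> J"
  shows "emeasure (PiM (insert j J) M)
           {r \<in> space (PiM (insert j J) M). (\<Prod>k\<in>insert j J. 1 + r k) \<le> c}
       = (\<integral>\<^sup>+x. emeasure (M j) {y. (1 + y) * (\<Prod>k\<in>J. 1 + x k) \<le> c} \<partial>PiM J M)"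
proof -
  interpret product_sigma_finite M by (simp add: product_sigma_finite_def SF)
  have space: "space (PiM I M) = PiE I (\<lambda>_. UNIV)" for I
    using sets_eq_imp_space_eq[OF SM] by (simp add: space_PiM)
  define D where "D = {r \<in> space (PiM (insert j J) M). (\<Prod>k\<in>insert j J. 1 + r k) \<le> c}"
  have "(\<lambda>r. r k) \<in> borel_measurable (PiM (insert j J) M)" if "k \<in> insert j J" for k
    using measurable_component_singleton[OF that] measurable_cong_sets[OF refl SM] by blast
  then have "(\<lambda>r. \<Prod>k\<in>insert j J. 1 + r k) \<in> borel_measurable (PiM (insert j J) M)"
    by (intro borel_measurable_prod borel_measurable_add) auto
  then have D: "D \<in> sets (PiM (insert j J) M)"
    unfolding D_def by measurable
  have slice: "indicator D (x(j := y)) = indicator {y. (1 + y) * (\<Prod>k\<in>J. 1 + x k) \<le> c} y"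
    if "x \<in> space (PiM J M)" for x and y :: real
  proof -
    have "(\<Prod>k\<in>J. 1 + (x(j := y)) k) = (\<Prod>k\<in>J. 1 + x k)"
      using J by (intro prod.cong) auto
    moreover have "x(j := y) \<in> space (PiM (insert j J) M)"
      using that J by (auto simp: space PiE_def extensional_def)
    ultimately show ?thesis using J by (simp add: D_def indicator_def)
  qed
  have "emeasure (PiM (insert j J) M) D = (\<integral>\<^sup>+r. indicator D r \<partial>PiM (insert j J) M)"
    using D by simp
  also have "\<dots> = (\<integral>\<^sup>+x. (\<integral>\<^sup>+y. indicator D (x(j := y)) \<partial>M j) \<partial>PiM J M)"
    using J D by (intro product_nn_integral_insert) auto
  also have "\<dots> = (\<integral>\<^sup>+x. emeasure (M j) {y. (1 + y) * (\<Prod>k\<in>J. 1 + x k) \<le> c} \<partial>PiM J M)"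
  proof (rule nn_integral_cong)
    fix x assume "x \<in> space (PiM J M)"
    moreover have "{y. (1 + y) * (\<Prod>k\<in>J. 1 + x k) \<le> c} \<in> sets (M j)"
      unfolding SM by measurable
    ultimately show "(\<integral>\<^sup>+y. indicator D (x(j := y)) \<partial>M j)
                   = emeasure (M j) {y. (1 + y) * (\<Prod>k\<in>J. 1 + x k) \<le> c}"
      by (simp add: slice)
  qed
  finally show ?thesis unfolding D_def .
qed

text \<open>
  For \<open>p > 0\<close> the event is a half line, where the CDFs compare; for \<open>p \<le> 0\<close> it contains
  \<open>[0, \<infinity>)\<close>, which carries all the mass of \<open>M\<close>.
\<close>
lemma emeasure_affine_le_dominated:
  fixes M N :: "real measure"
  assumes PM: "prob_space M" and SM: "sets M = sets borel" and PN: "prob_space N"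
    and dom: "\<And>t. emeasure N {..t} \<le> emeasure M {..t}"
    and neg: "emeasure M {..<0} = 0" and c: "0 < c"
  shows "emeasure N {y. (1 + y) * p \<le> c} \<le> emeasure M {y. (1 + y) * p \<le> c}"
proof (cases "0 < p")
  case True
  then have "{y. (1 + y) * p \<le> c} = {..c / p - 1}"
    by (auto simp: field_simps)
  then show ?thesis using dom by simp
next
  case False
  interpret M: prob_space M by (fact PM)
  interpret N: prob_space N by (fact PN)
  have "emeasure M {..<0} + emeasure M {0..} = emeasure M ({..<0} \<union> {0..})"
    by (intro plus_emeasure) (auto simp: SM)
  also have "{..<0} \<union> {0..} = space M"
    using sets_eq_imp_space_eq[OF SM] by auto
  finally have one: "emeasure M {0..} = 1"
    using neg M.emeasure_space_1 by simp
  have "{0..} \<subseteq> {y. (1 + y) * p \<le> c}"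
    using False c by (auto intro!: order.trans[OF mult_nonneg_nonpos])
  then have "1 \<le> emeasure M {y. (1 + y) * p \<le> c}"
    unfolding one[symmetric] by (intro emeasure_mono) (auto simp: SM)
  then show ?thesis
    using N.emeasure_le_1 order.trans by blast
qed

lemma emeasure_PiM_prod_le_dominated:
  fixes M :: "nat \<Rightarrow> real measure" and N :: "real measure"
  assumes PM: "\<And>k. prob_space (M k)" and SM: "\<And>k. sets (M k) = sets borel"
    and PN: "prob_space N" and SN: "sets N = sets borel"
    and dom: "\<And>t. emeasure N {..t} \<le> emeasure (M j) {..t}"
    and neg: "emeasure (M j) {..<0} = 0"
    and J: "finite J" "j \<notin> J" and c: "0 < c"
  shows "emeasure (PiM (insert j J) (M(j := N)))
           {r \<in> space (PiM (insert j J) (M(j := N))). (\<Prod>k\<in>insert j J. 1 + r k) \<le> c}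
       \<le> emeasure (PiM (insert j J) M)
           {r \<in> space (PiM (insert j J) M). (\<Prod>k\<in>insert j J. 1 + r k) \<le> c}"
proof -
  have SF: "sigma_finite_measure (M k)" "sigma_finite_measure ((M(j := N)) k)" for k
    using PM PN prob_space_imp_sigma_finite by auto
  have SM': "sets ((M(j := N)) k) = sets borel" for k
    using SM SN by auto
  have PiM_J: "PiM J (M(j := N)) = PiM J M"
    using J by (intro PiM_cong) auto
  show ?thesis
    unfolding emeasure_PiM_insert_prod_le[OF SF(1) SM J] emeasure_PiM_insert_prod_le[OF SF(2) SM' J]
      PiM_J
    using emeasure_affine_le_dominated[OF PM SM PN dom neg c]
    by (intro nn_integral_mono) simp
qed

lemma F_A_nonneg: "0 \<le> F_A K m Om l x"
  by (simp add: F_A_def)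

lemma F_A_cong:
  assumes "\<And>k. k < K \<Longrightarrow> l k = l' k"
  shows "F_A K m Om l x = F_A K m Om l' x"
proof -
  have "PiM {..<K} (\<lambda>k. gamma_distr (real m + real (l k)) (Om k))
      = PiM {..<K} (\<lambda>k. gamma_distr (real m + real (l' k)) (Om k))"
    using assms by (intro PiM_cong) auto
  then show ?thesis unfolding F_A_def by simp
qed

lemma sum_fun_upd_Suc:
  fixes l :: "nat \<Rightarrow> nat"
  assumes "j < K"
  shows "(\<Sum>k<K. (l(j := Suc (l j))) k) = Suc (\<Sum>k<K. l k)"
proof -
  have "(\<Sum>k<K. (l(j := Suc (l j))) k) = Suc (l j) + (\<Sum>k\<in>{..<K} - {j}. l k)"
    using assms by (subst sum.remove[of _ j]) (auto intro!: sum.cong)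
  also have "\<dots> = Suc (\<Sum>k<K. l k)"
    using assms by (subst (2) sum.remove[of _ j]) auto
  finally show ?thesis .
qed

lemma F_A_fun_upd_Suc_le:
  assumes j: "j < K" and Om: "\<And>k. k < K \<Longrightarrow> 0 < Om k" and x: "0 < x" and m: "0 < m"
  shows "F_A K m Om (l(j := Suc (l j))) x \<le> F_A K m Om l x"
proof -
  \<comment> \<open>The dummy factors outside \<open>{..<K}\<close> make every \<open>G l' k\<close> a probability measure on the reals.\<close>
  define G where "G l' k = (if k < K then gamma_distr (real (m + l' k)) (Om k) else return borel 0)"
    for l' :: "nat \<Rightarrow> nat" and k
  have PG: "prob_space (G l' k)" for l' k
    using Om m prob_space_gamma_distr[of "m + l' k" "Om k"] by (auto simp: G_def prob_space_return)
  have SG: "sets (G l' k) = sets borel" for l' k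
    by (simp add: G_def sets_gamma_distr)
  have F_A_G: "F_A K m Om l' x = measure (PiM {..<K} (G l'))
                 {r \<in> space (PiM {..<K} (G l')). (\<Prod>k<K. 1 + r k) \<le> x}" for l'
  proof -
    have "PiM {..<K} (\<lambda>k. gamma_distr (real m + real (l' k)) (Om k)) = PiM {..<K} (G l')"
      by (intro PiM_cong) (auto simp: G_def)
    then show ?thesis by (simp add: F_A_def)
  qed
  define N where "N = gamma_distr (real (Suc (m + l j))) (Om j)"
  have G_upd: "G (l(j := Suc (l j))) = (G l)(j := N)"
    using j by (auto simp: G_def N_def fun_eq_iff)
  have dom: "emeasure N {..t} \<le> emeasure (G l j) {..t}" for t
    using j m emeasure_gamma_distr_Suc_atMost_le[of "m + l j" "Om j" t] Om[OF j]
    by (simp add: N_def G_def)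
  have neg: "emeasure (G l j) {..<0} = 0"
    using j by (simp add: G_def emeasure_gamma_distr_negative)
  have PN: "prob_space N" "sets N = sets borel"
    using m Om[OF j] prob_space_gamma_distr[of "Suc (m + l j)" "Om j"]
    by (simp_all add: N_def sets_gamma_distr)
  define J where "J = {..<K} - {j}"
  have K: "{..<K} = insert j J" "j \<notin> J" "finite J"
    using j by (auto simp: J_def)
  have "emeasure (PiM {..<K} (G (l(j := Suc (l j)))))
               {r \<in> space (PiM {..<K} (G (l(j := Suc (l j))))). (\<Prod>k<K. 1 + r k) \<le> x}
           \<le> emeasure (PiM {..<K} (G l)) {r \<in> space (PiM {..<K} (G l)). (\<Prod>k<K. 1 + r k) \<le> x}"
    unfolding G_upd K(1)
    by (rule emeasure_PiM_prod_le_dominated[where M = "G l", OF PG SG PN dom neg K(3,2) x])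
  moreover have "finite_measure (PiM {..<K} (G l'))" for l'
    using prob_space_PiM[where M = "G l'" and I = "{..<K}"] PG by (simp add: prob_space_def)
  ultimately show ?thesis
    unfolding F_A_G by (simp add: finite_measure.emeasure_eq_measure)
qed

lemma F_A_antimono:
  assumes Om: "\<And>k. k < K \<Longrightarrow> 0 < Om k" and x: "0 < x" and m: "0 < m"
    and le: "\<And>k. k < K \<Longrightarrow> l k \<le> l' k"
  shows "F_A K m Om l' x \<le> F_A K m Om l x"
  using le
proof (induction "\<Sum>k<K. l' k - l k" arbitrary: l)
  case 0
  then have "l' k = l k" if "k < K" for k
    using that by (simp add: le_antisym)
  then show ?case by (simp add: F_A_cong[of K l' l])
next
  case (Suc d)
  have "\<exists>j<K. l j < l' j"
  proof (rule ccontr)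
    assume "\<not> ?thesis"
    then have "l' k \<le> l k" if "k < K" for k using that not_less by blast
    then have "(\<Sum>k<K. l' k - l k) = 0" by simp
    then show False using Suc.hyps(2) by simp
  qed
  then obtain j where j: "j < K" "l j < l' j" by blast
  define l2 where "l2 = l(j := Suc (l j))"
  have le2: "\<And>k. k < K \<Longrightarrow> l2 k \<le> l' k" using Suc.prems j by (auto simp: l2_def)
  have "(\<Sum>k<K. l' k - l2 k) + (\<Sum>k<K. l2 k) = (\<Sum>k<K. l' k)"
    using le2 by (simp flip: sum.distrib)
  moreover have "(\<Sum>k<K. l' k - l k) + (\<Sum>k<K. l k) = (\<Sum>k<K. l' k)"
    using Suc.prems by (simp flip: sum.distrib)
  moreover have "(\<Sum>k<K. l2 k) = Suc (\<Sum>k<K. l k)"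
    unfolding l2_def by (rule sum_fun_upd_Suc[OF j(1)])
  ultimately have "d = (\<Sum>k<K. l' k - l2 k)" using Suc.hyps(2) by simp
  then have "F_A K m Om l' x \<le> F_A K m Om l2 x" using Suc.hyps(1) le2 by blast
  also have "\<dots> \<le> F_A K m Om l x" unfolding l2_def by (rule F_A_fun_upd_Suc_le[OF j(1) Om x m])
  finally show ?case .
qed

subsection \<open>Multi-indices of fixed total\<close>

definition weak_compositions :: "nat \<Rightarrow> nat \<Rightarrow> (nat \<Rightarrow> nat) set" where
  "weak_compositions K n = {l \<in> multi_idx K. (\<Sum>k<K. l k) = n}"

lemma finite_weak_compositions: "finite (weak_compositions K n)"
proof -
  have "weak_compositions K n \<subseteq> (\<lambda>f k. if k < K then f k else 0) ` ({..<K} \<rightarrow>\<^sub>E {..n})"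
  proof
    fix l assume l: "l \<in> weak_compositions K n"
    then have "l = (\<lambda>k. if k < K then restrict l {..<K} k else 0)"
      by (auto simp: weak_compositions_def multi_idx_def fun_eq_iff)
    moreover have "restrict l {..<K} \<in> {..<K} \<rightarrow>\<^sub>E {..n}"
      using l member_le_sum[of _ "{..<K}" l] by (auto simp: weak_compositions_def)
    ultimately show "l \<in> (\<lambda>f k. if k < K then f k else 0) ` ({..<K} \<rightarrow>\<^sub>E {..n})" by blast
  qed
  then show ?thesis by (rule finite_subset) (auto intro: finite_PiE)
qed

lemma weak_compositions_Suc:
  "weak_compositions (Suc K) n = (\<Union>i\<le>n. (\<lambda>l. l(K := i)) ` weak_compositions K (n - i))"
proof (intro equalityI subsetI)
  fix l assume l: "l \<in> weak_compositions (Suc K) n"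
  have "(\<Sum>k<K. (l(K := 0)) k) = (\<Sum>k<K. l k)" by (intro sum.cong) auto
  then have "l(K := 0) \<in> weak_compositions K (n - l K)"
    using l by (auto simp: weak_compositions_def multi_idx_def)
  moreover have "l = (l(K := 0))(K := l K)" by simp
  moreover have "l K \<le> n" using l by (auto simp: weak_compositions_def)
  ultimately show "l \<in> (\<Union>i\<le>n. (\<lambda>l. l(K := i)) ` weak_compositions K (n - i))" by blast
next
  fix l assume "l \<in> (\<Union>i\<le>n. (\<lambda>l. l(K := i)) ` weak_compositions K (n - i))"
  then obtain i l' where "i \<le> n" "l' \<in> weak_compositions K (n - i)" "l = l'(K := i)" by auto
  moreover have "(\<Sum>k<K. (l'(K := i)) k) = (\<Sum>k<K. l' k)" by (intro sum.cong) auto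
  ultimately show "l \<in> weak_compositions (Suc K) n"
    by (auto simp: weak_compositions_def multi_idx_def)
qed

lemma sum_weak_compositions_Suc:
  "(\<Sum>l\<in>weak_compositions (Suc K) n. f l)
     = (\<Sum>i\<le>n. \<Sum>l\<in>weak_compositions K (n - i). f (l(K := i)))"
proof -
  have disjoint: "\<forall>i\<in>{..n}. \<forall>i'\<in>{..n}. i \<noteq> i' \<longrightarrow>
      (\<lambda>l. l(K := i)) ` weak_compositions K (n - i) \<inter> (\<lambda>l. l(K := i')) ` weak_compositions K (n - i') = {}"
    by (auto simp: fun_eq_iff) (metis fun_upd_same)
  have inj: "inj_on (\<lambda>l. l(K := i)) (weak_compositions K (n - i))" for i
  proof (rule inj_onI)
    fix a b assume "a \<in> weak_compositions K (n - i)" "b \<in> weak_compositions K (n - i)"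
      and upd: "a(K := i) = b(K := i)"
    then have "a K = 0" "b K = 0"
      by (auto simp: weak_compositions_def multi_idx_def)
    then show "a = b"
      using upd by (auto simp: fun_eq_iff) (metis fun_upd_apply)
  qed
  have "(\<Sum>l\<in>weak_compositions (Suc K) n. f l)
      = (\<Sum>i\<le>n. \<Sum>l\<in>(\<lambda>l. l(K := i)) ` weak_compositions K (n - i). f l)"
    unfolding weak_compositions_Suc using disjoint
    by (intro sum.UNION_disjoint) (auto intro: finite_weak_compositions)
  also have "\<dots> = (\<Sum>i\<le>n. \<Sum>l\<in>weak_compositions K (n - i). f (l(K := i)))"
    using inj by (intro sum.cong refl sum.reindex[unfolded comp_def])
  finally show ?thesis .
qed

lemma multinomial_weak_compositions:
  fixes w :: "nat \<Rightarrow> 'a :: field_char_0"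
  shows "(\<Sum>l\<in>weak_compositions K n. \<Prod>k<K. w k ^ l k / fact (l k)) = (\<Sum>k<K. w k) ^ n / fact n"
proof (induction K arbitrary: n)
  case 0
  have "weak_compositions 0 n = (if n = 0 then {\<lambda>_. 0} else {})"
    by (auto simp: weak_compositions_def multi_idx_def fun_eq_iff)
  then show ?case by simp
next
  case (Suc K)
  have prod_upd: "(\<Prod>k<Suc K. w k ^ (l(K := i)) k / fact ((l(K := i)) k))
                = w K ^ i / fact i * (\<Prod>k<K. w k ^ l k / fact (l k))" for l i
  proof -
    have "(\<Prod>k<K. w k ^ (l(K := i)) k / fact ((l(K := i)) k)) = (\<Prod>k<K. w k ^ l k / fact (l k))"
      by (intro prod.cong) auto
    then show ?thesis by simp
  qed
  have "(\<Sum>l\<in>weak_compositions (Suc K) n. \<Prod>k<Suc K. w k ^ l k / fact (l k))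
      = (\<Sum>i\<le>n. w K ^ i / fact i
                  * (\<Sum>l\<in>weak_compositions K (n - i). \<Prod>k<K. w k ^ l k / fact (l k)))"
    unfolding sum_weak_compositions_Suc prod_upd by (simp only: sum_distrib_left)
  also have "\<dots> = (\<Sum>i\<le>n. w K ^ i / fact i * ((\<Sum>k<K. w k) ^ (n - i) / fact (n - i)))"
    by (simp only: Suc.IH)
  also have "\<dots> = (\<Sum>i\<le>n. of_nat (n choose i) * w K ^ i * (\<Sum>k<K. w k) ^ (n - i)) / fact n"
    unfolding sum_divide_distrib by (intro sum.cong refl) (simp add: binomial_fact field_simps)
  also have "\<dots> = (w K + (\<Sum>k<K. w k)) ^ n / fact n"
    by (simp add: binomial_ring)
  finally show ?case by (simp add: add.commute)
qed

lemma exists_weak_composition_below: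
  assumes "l \<in> multi_idx K" and "n \<le> (\<Sum>k<K. l k)"
  shows "\<exists>l0 \<in> weak_compositions K n. \<forall>k<K. l0 k \<le> l k"
  using assms(2)
proof (induction n)
  case 0
  show ?case by (rule bexI[of _ "\<lambda>_. 0"]) (auto simp: weak_compositions_def multi_idx_def)
next
  case (Suc n)
  then obtain l0 where l0: "l0 \<in> weak_compositions K n" "\<forall>k<K. l0 k \<le> l k" by auto
  have "\<exists>k<K. l0 k \<noteq> l k"
  proof (rule ccontr)
    assume "\<not> ?thesis"
    then have "(\<Sum>k<K. l0 k) = (\<Sum>k<K. l k)" by (intro sum.cong) auto
    then show False using l0(1) Suc.prems by (simp add: weak_compositions_def)
  qed
  then obtain j where j: "j < K" "l0 j < l j"
    using l0(2) le_neq_implies_less by blast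
  show ?case
  proof (rule bexI[of _ "l0(j := Suc (l0 j))"])
    show "l0(j := Suc (l0 j)) \<in> weak_compositions K (Suc n)"
      using l0(1) j sum_fun_upd_Suc[OF j(1), of l0]
      by (auto simp: weak_compositions_def multi_idx_def)
  qed (use l0 j in auto)
qed

lemma F_A_le_Max_weak_compositions:
  assumes "\<And>k. k < K \<Longrightarrow> 0 < Om k" and "0 < x" and "0 < m"
    and "l \<in> multi_idx K" and "n \<le> (\<Sum>k<K. l k)"
  shows "F_A K m Om l x \<le> Max ((\<lambda>l. F_A K m Om l x) ` weak_compositions K n)"
proof -
  obtain l0 where "l0 \<in> weak_compositions K n" "\<forall>k<K. l0 k \<le> l k"
    using exists_weak_composition_below[OF assms(4,5)] by blast
  then have "F_A K m Om l x \<le> F_A K m Om l0 x"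
    and "F_A K m Om l0 x \<le> Max ((\<lambda>l. F_A K m Om l x) ` weak_compositions K n)"
    using F_A_antimono[OF assms(1-3)] finite_weak_compositions by auto
  then show ?thesis by linarith
qed

subsection \<open>The negative binomial series and its tail\<close>

lemma sum_atLeastAtMost_le_suminf_offset:
  fixes u :: "nat \<Rightarrow> real"
  assumes "summable u" and "\<And>n. 0 \<le> u n"
  shows "(\<Sum>n\<in>{k..M}. u n) \<le> (\<Sum>j. u (j + k))"
proof -
  have "(\<Sum>n\<in>{k..M}. u n) = (\<Sum>j<Suc M - k. u (j + k))"
    by (rule sum.reindex_bij_witness[of _ "\<lambda>j. j + k" "\<lambda>n. n - k"]) auto
  also have "\<dots> \<le> (\<Sum>j. u (j + k))"
    using assms by (intro sum_le_suminf summable_ignore_initial_segment) auto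
  finally show ?thesis .
qed

lemma pochhammer_series_sums:
  fixes a z :: real
  assumes "\<bar>z\<bar> < 1"
  shows "(\<lambda>n. pochhammer a n * z ^ n / fact n) sums (1 - z) powr (- a)"
proof -
  have "((- a) gchoose n) * (- z) ^ n = pochhammer a n * z ^ n / fact n" for n
  proof -
    have "((- a) gchoose n) * (- z) ^ n = ((-1) ^ n * (-1) ^ n) * pochhammer a n * z ^ n / fact n"
      by (simp add: gbinomial_pochhammer power_minus[of z] field_simps)
    then show ?thesis by (simp flip: power_add)
  qed
  then show ?thesis
    using gen_binomial_real[of "- z" "- a"] assms by simp
qed

text \<open>
  The shifted coefficients factor through \<open>(a)\<^sub>N\<^sub>+\<^sub>1\<^sub>+\<^sub>j = (a)\<^sub>N\<^sub>+\<^sub>1 (a+N+1)\<^sub>j\<close> and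
  \<open>(N+1+j)! = (N+1)! (N+2)\<^sub>j\<close>; the factor \<open>(1)\<^sub>j/j! = 1\<close> is inserted to match \<open>\<^sub>2F\<^sub>1\<close>.
\<close>
lemma pochhammer_series_tail_eq_hyp2F1:
  fixes a z :: real
  assumes z: "\<bar>z\<bar> < 1"
  shows "(\<Sum>j. pochhammer a (j + (N + 1)) * z ^ (j + (N + 1)) / fact (j + (N + 1)))
       = z ^ (N + 1) * pochhammer a (N + 1) / fact (N + 1) * hyp2F1 (a + real N + 1) 1 (real N + 2) z"
proof -
  define u where "u n = pochhammer a n * z ^ n / fact n" for n
  define t where "t j = pochhammer (a + real N + 1) j * pochhammer 1 j
                        / (pochhammer (real N + 2) j * fact j) * z ^ j" for j
  define C where "C = z ^ (N + 1) * pochhammer a (N + 1) / fact (N + 1)"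
  have shift: "u (j + (N + 1)) = C * t j" for j
  proof -
    have "pochhammer a (N + 1 + j) = pochhammer a (N + 1) * pochhammer (a + real N + 1) j"
      using pochhammer_product'[of a "N + 1" j] by (simp add: add_ac)
    moreover have "fact (N + 1 + j) = (fact (N + 1) * pochhammer (real N + 2) j :: real)"
      using pochhammer_product'[of "1::real" "N + 1" j] by (simp add: pochhammer_fact[symmetric] add_ac)
    moreover have "pochhammer (1::real) j = fact j" by (simp add: pochhammer_fact)
    moreover have "pochhammer (real N + 2) j > 0" by (intro pochhammer_pos) simp
    ultimately show ?thesis
      unfolding u_def t_def C_def add.commute[of j] by (simp add: power_add field_simps)
  qed
  have "summable u"
    using pochhammer_series_sums[where a = a, OF z] unfolding u_def by (simp add: sums_iff)
  then have "summable (\<lambda>j. u (j + (N + 1)))"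
    by (rule summable_ignore_initial_segment)
  then have "C \<noteq> 0 \<Longrightarrow> summable t"
    unfolding shift using summable_mult_D by blast
  then have "(\<Sum>j. u (j + (N + 1))) = C * (\<Sum>j. t j)"
    unfolding shift by (cases "C = 0") (auto intro: suminf_mult)
  then show ?thesis by (simp add: u_def C_def t_def hyp2F1_def)
qed

lemma Ssum_ge_1:
  assumes "\<And>k. k < K \<Longrightarrow> (lam k)\<^sup>2 < 1"
  shows "1 \<le> Ssum K lam"
  unfolding Ssum_def using assms by (auto intro!: sum_nonneg divide_nonneg_pos)

lemma w_k_nonneg:
  assumes "\<And>k. k < K \<Longrightarrow> (lam k)\<^sup>2 < 1" and "k < K"
  shows "0 \<le> w_k K lam k"
  unfolding w_k_def using assms Ssum_ge_1[of K lam] by (intro divide_nonneg_pos) auto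

lemma sum_w_k_less_1:
  assumes "\<And>k. k < K \<Longrightarrow> (lam k)\<^sup>2 < 1"
  shows "(\<Sum>k<K. w_k K lam k) < 1"
proof -
  have "(\<Sum>k<K. w_k K lam k) = (Ssum K lam - 1) / Ssum K lam"
    by (simp add: w_k_def Ssum_def sum_divide_distrib)
  then show ?thesis using Ssum_ge_1[of K lam] assms by simp
qed

lemma W_l_eq_pochhammer:
  assumes "0 < m"
  shows "W_l K m lam l = pochhammer (real m) (\<Sum>k<K. l k) * Ssum K lam powr (- real m)
                         * (\<Prod>k<K. w_k K lam k ^ l k / fact (l k))"
proof -
  have "real m \<notin> \<int>\<^sub>\<le>\<^sub>0" using assms nonpos_Ints_nonpos by force
  then show ?thesis unfolding W_l_def by (simp add: pochhammer_Gamma)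
qed

lemma W_l_nonneg:
  assumes "0 < m" and "\<And>k. k < K \<Longrightarrow> (lam k)\<^sup>2 < 1"
  shows "0 \<le> W_l K m lam l"
  unfolding W_l_eq_pochhammer[OF assms(1)] using w_k_nonneg[of K lam] assms
  by (intro mult_nonneg_nonneg prod_nonneg pochhammer_nonneg divide_nonneg_nonneg) auto

lemma sum_W_l_weak_compositions:
  assumes "0 < m"
  shows "(\<Sum>l\<in>weak_compositions K n. W_l K m lam l)
       = W_l K m lam (\<lambda>_. 0) * (pochhammer (real m) n * (\<Sum>k<K. w_k K lam k) ^ n / fact n)"
proof -
  have "(\<Sum>l\<in>weak_compositions K n. W_l K m lam l)
      = (\<Sum>l\<in>weak_compositions K n. pochhammer (real m) n * Ssum K lam powr (- real m)
                                       * (\<Prod>k<K. w_k K lam k ^ l k / fact (l k)))"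
    by (intro sum.cong) (simp_all add: W_l_eq_pochhammer[OF assms] weak_compositions_def)
  also have "\<dots> = pochhammer (real m) n * Ssum K lam powr (- real m)
                   * ((\<Sum>k<K. w_k K lam k) ^ n / fact n)"
    by (simp add: multinomial_weak_compositions flip: sum_distrib_left)
  finally show ?thesis by (simp add: W_l_eq_pochhammer[OF assms])
qed

lemma sum_W_l_tail_le:
  assumes m: "0 < m" and lam: "\<And>k. k < K \<Longrightarrow> (lam k)\<^sup>2 < 1"
    and F: "finite F" "F \<subseteq> {l \<in> multi_idx K. N + 1 \<le> (\<Sum>k<K. l k)}"
  defines "s \<equiv> \<Sum>k<K. w_k K lam k"
  shows "(\<Sum>l\<in>F. W_l K m lam l) \<le> W_l K m lam (\<lambda>_. 0) *
           (s ^ (N + 1) * pochhammer (real m) (N + 1) / fact (N + 1)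
            * hyp2F1 (real m + real N + 1) 1 (real N + 2) s)"
proof -
  define u where "u n = pochhammer (real m) n * s ^ n / fact n" for n
  have s: "0 \<le> s" "s < 1"
    unfolding s_def using w_k_nonneg[of K lam] sum_w_k_less_1[of K lam] lam by (auto intro: sum_nonneg)
  have u_nonneg: "0 \<le> u n" for n
    unfolding u_def using s m by (intro divide_nonneg_pos mult_nonneg_nonneg pochhammer_nonneg) auto
  have summable_u: "summable u"
    using pochhammer_series_sums[where a = "real m" and z = s] s unfolding u_def by (simp add: sums_iff)
  obtain M where M: "\<And>l. l \<in> F \<Longrightarrow> (\<Sum>k<K. l k) \<le> M"
    using F(1) finite_nat_iff_bounded_le[of "(\<lambda>l. \<Sum>k<K. l k) ` F"] by auto
  have "(\<Sum>l\<in>F. W_l K m lam l) \<le> (\<Sum>l\<in>(\<Union>n\<in>{N+1..M}. weak_compositions K n). W_l K m lam l)"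
    using F M W_l_nonneg[where K = K and lam = lam, OF m lam]
    by (intro sum_mono2) (auto intro: finite_weak_compositions[unfolded weak_compositions_def]
          simp: weak_compositions_def)
  also have "\<dots> = (\<Sum>n\<in>{N+1..M}. \<Sum>l\<in>weak_compositions K n. W_l K m lam l)"
    by (intro sum.UNION_disjoint finite_weak_compositions ballI) (auto simp: weak_compositions_def)
  also have "\<dots> = W_l K m lam (\<lambda>_. 0) * (\<Sum>n\<in>{N+1..M}. u n)"
    by (simp add: sum_W_l_weak_compositions[OF m] u_def s_def sum_distrib_left)
  also have "\<dots> \<le> W_l K m lam (\<lambda>_. 0) * (\<Sum>j. u (j + (N + 1)))"
    using sum_atLeastAtMost_le_suminf_offset[OF summable_u u_nonneg]
      W_l_nonneg[where K = K and lam = lam, OF m lam]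
    by (rule mult_left_mono)
  also have "\<dots> = W_l K m lam (\<lambda>_. 0) *
           (s ^ (N + 1) * pochhammer (real m) (N + 1) / fact (N + 1)
            * hyp2F1 (real m + real N + 1) 1 (real N + 2) s)"
    using pochhammer_series_tail_eq_hyp2F1[where a = "real m" and z = s and N = N] s
    unfolding u_def by simp
  finally show ?thesis .
qed

lemma sum_W_l_F_A_tail_le:
  assumes K: "1 \<le> K" and m: "0 < m" and lam: "\<And>k. k < K \<Longrightarrow> (lam k)\<^sup>2 < 1"
    and Om: "\<And>k. k < K \<Longrightarrow> 0 < Om k" and x: "0 < x"
    and F: "finite F" "F \<subseteq> {l \<in> multi_idx K. N + 1 \<le> (\<Sum>k<K. l k)}"
  defines "Fmax \<equiv> Max ((\<lambda>l. F_A K m Om l x) ` weak_compositions K (N + 1))"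
    and "s \<equiv> \<Sum>k<K. w_k K lam k"
  shows "(\<Sum>l\<in>F. W_l K m lam l * F_A K m Om l x) \<le> W_l K m lam (\<lambda>_. 0) * Fmax *
           (s ^ (N + 1) * pochhammer (real m) (N + 1) / fact (N + 1)
            * hyp2F1 (real m + real N + 1) 1 (real N + 2) s)"
proof -
  have F_le: "F_A K m Om l x \<le> Fmax" if "l \<in> multi_idx K" "N + 1 \<le> (\<Sum>k<K. l k)" for l
    unfolding Fmax_def using F_A_le_Max_weak_compositions[where Om = Om, OF Om x m that] .
  have "F_A K m Om (\<lambda>k. if k = 0 then N + 1 else 0) x \<le> Fmax"
    using K by (intro F_le) (simp_all add: multi_idx_def Suc_le_eq)
  then have "0 \<le> Fmax"
    using F_A_nonneg order.trans by blast
  have "(\<Sum>l\<in>F. W_l K m lam l * F_A K m Om l x) \<le> (\<Sum>l\<in>F. W_l K m lam l) * Fmax"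
    unfolding sum_distrib_right using F F_le W_l_nonneg[where K = K and lam = lam, OF m lam]
    by (intro sum_mono mult_left_mono) auto
  also have "\<dots> \<le> W_l K m lam (\<lambda>_. 0) *
           (s ^ (N + 1) * pochhammer (real m) (N + 1) / fact (N + 1)
            * hyp2F1 (real m + real N + 1) 1 (real N + 2) s) * Fmax"
    using sum_W_l_tail_le[where K = K and lam = lam, OF m lam F] \<open>0 \<le> Fmax\<close>
    unfolding s_def by (rule mult_right_mono)
  finally show ?thesis by (simp only: ac_simps)
qed

lemma nonneg_summable_on_infsum_le:
  fixes f :: "'a \<Rightarrow> real"
  assumes "\<And>x. x \<in> A \<Longrightarrow> 0 \<le> f x" and "\<And>F. finite F \<Longrightarrow> F \<subseteq> A \<Longrightarrow> sum f F \<le> b"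
  shows "f summable_on A \<and> 0 \<le> infsum f A \<and> infsum f A \<le> b"
proof -
  have "f summable_on A"
    using assms by (intro nonneg_bdd_above_summable_on bdd_aboveI) auto
  then show ?thesis
    using assms by (auto intro: infsum_nonneg infsum_le_finite_sums)
qed

theorem mainTheorem6:
  fixes K m N :: nat
    and sigma2 P lam :: "nat \<Rightarrow> real"
    and N0 R :: real
  assumes "K \<ge> 1" and "m > 0"
    and "\<And>k. k < K \<Longrightarrow> sigma2 k > 0"
    and "\<And>k. k < K \<Longrightarrow> P k > 0"
    and "\<And>k. k < K \<Longrightarrow> 0 \<le> lam k \<and> lam k < 1"
    and "N0 > 0" and "R > 0"
  shows
    "let Om = Omega_k m P sigma2 lam N0;
         f = (\<lambda>l. W_l K m lam l * F_A K m Om l (2 powr R));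
         A = {l \<in> multi_idx K. (\<Sum>k<K. l k) \<ge> N + 1};
         Fmax = Max ((\<lambda>l. F_A K m Om l (2 powr R)) ` {l \<in> multi_idx K. (\<Sum>k<K. l k) = N + 1});
         sw = (\<Sum>k<K. w_k K lam k);
         xi = sw ^ (N + 1) * pochhammer (real m) (N + 1) / fact (N + 1)
              * hyp2F1 (real m + real N + 1) 1 (real N + 2) sw
     in f summable_on A \<and> 0 \<le> infsum f A \<and>
        infsum f A \<le> W_l K m lam (\<lambda>_. 0) * Fmax * xi"
proof -
  define Om where "Om = Omega_k m P sigma2 lam N0"
  define A where "A = {l \<in> multi_idx K. N + 1 \<le> (\<Sum>k<K. l k)}"
  define Fmax where "Fmax = Max ((\<lambda>l. F_A K m Om l (2 powr R)) ` weak_compositions K (N + 1))"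
  define sw where "sw = (\<Sum>k<K. w_k K lam k)"
  define xi where "xi = sw ^ (N + 1) * pochhammer (real m) (N + 1) / fact (N + 1)
                        * hyp2F1 (real m + real N + 1) 1 (real N + 2) sw"
  have lam: "\<And>k. k < K \<Longrightarrow> (lam k)\<^sup>2 < 1"
    using assms(5) by (simp add: abs_square_less_1)
  have Om_pos: "\<And>k. k < K \<Longrightarrow> 0 < Om k"
    using lam assms(2-4,6) by (simp add: Om_def Omega_k_def)
  have "(\<lambda>l. W_l K m lam l * F_A K m Om l (2 powr R)) summable_on A
    \<and> 0 \<le> infsum (\<lambda>l. W_l K m lam l * F_A K m Om l (2 powr R)) A
    \<and> infsum (\<lambda>l. W_l K m lam l * F_A K m Om l (2 powr R)) A \<le> W_l K m lam (\<lambda>_. 0) * Fmax * xi"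
    using sum_W_l_F_A_tail_le[where lam = lam and Om = Om, OF assms(1,2) lam Om_pos, of "2 powr R"]
      W_l_nonneg[where K = K and lam = lam, OF assms(2) lam] F_A_nonneg
    unfolding A_def Fmax_def xi_def sw_def by (intro nonneg_summable_on_infsum_le) simp_all
  then show ?thesis
    unfolding Let_def Om_def A_def Fmax_def xi_def sw_def weak_compositions_def .
qed

end
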